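(* Let $n\in\mathbb{N}$ and let $X$ be the set of all compact subsets of $(0,1)^n$ with nonempty interior (in $\mathbb{R}^n$), with the subspace topology of $\mathcal{K}((0,1)^n)$. Then there is a continuous map $\Phi:\mathcal{K}([0,1]^n)\to X$ such that for all $K,L\in\mathcal{K}([0,1]^n)$, $K$ is homeomorphic to $L$ if and only if $\Phi(K)$ is homeomorphic to $\Phi(L)$.
   Context: $\mathcal{K}(Z)$ denotes the space of compact subsets of $Z$ with the Vietoris topology. *)

theory Defs
  imports "HOL-Analysis.Analysis"
begin

definition compact_subsets :: "'a::topological_space set \<Rightarrow> 'a set set" where
  "compact_subsets Z = {K. compact K \<and> K \<subseteq> Z}"

definition vietoris_topology :: "'a::topological_space set \<Rightarrow> 'a set topology" where
  "vietoris_topology Z = topology_generated_by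
     ({{K \<in> compact_subsets Z. K \<subseteq> U} | U. openin (top_of_set Z) U} \<union>
      {{K \<in> compact_subsets Z. K \<inter> U \<noteq> {}} | U. openin (top_of_set Z) U})"

end

theory Submission
  imports Defs
begin

(*
  Take Phi K = s K \<union> Q, where s is the affine contraction of [0,1]^n onto [1/8,3/8]^n and
  Q = [5/8,7/8]^n is a solid cube; Q provides the interior and lies apart from s K.
  Continuity holds because K \<mapsto> f ` K \<union> C is Vietoris-continuous for any continuous f and
  compact C.  Since s is a homeomorphism onto its image, it remains to cancel Q: let
  h : A \<union> Q \<cong> B \<union> Q with Q compact, connected and disjoint from A and B.  The connected set
  h Q lies either in Q or in B.  In the first case also h\<inverse> Q \<subseteq> Q, so h restricts to A \<cong> B;
  in the second, A contains the copy h\<inverse> Q of Q, and exchanging it with Q gives A \<cong> B.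
*)

lemma homeomorphic_Un_disjoint:
  fixes A B C :: "'a::t2_space set"
  assumes "compact A" "compact C" "A \<inter> C = {}" "B \<inter> C = {}"
    and "A homeomorphic B"
  shows "(A \<union> C) homeomorphic (B \<union> C)"
proof -
  obtain f f' where f: "homeomorphism A B f f'"
    using assms(5) unfolding homeomorphic_def by blast
  define g where "g x = (if x \<in> A then f x else x)" for x
  have "continuous_on (A \<union> C) g"
  proof (rule continuous_on_closed_Un)
    show "closed A" "closed C" using assms(1,2) compact_imp_closed by auto
    show "continuous_on A g"
      using homeomorphism_cont1[OF f] by (rule continuous_on_eq) (simp add: g_def)
    show "continuous_on C g"
      using continuous_on_id by (rule continuous_on_eq) (use assms(3) in \<open>auto simp: g_def\<close>)
  qed
  moreover have "g ` (A \<union> C) = B \<union> C"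
  proof -
    have "g ` A = B" "g ` C = C"
      using homeomorphism_image1[OF f] assms(3) by (force simp: g_def)+
    then show ?thesis by (simp add: image_Un)
  qed
  moreover have "inj_on g (A \<union> C)"
    using homeomorphism_apply1[OF f] homeomorphism_image1[OF f] assms(4)
    unfolding inj_on_def g_def by (metis IntI Un_iff empty_iff image_eqI)
  ultimately show ?thesis
    by (rule homeomorphic_compact[OF compact_Un[OF assms(1,2)]])
qed

lemma homeomorphic_cancel_if_invariant:
  assumes h: "homeomorphism (A \<union> Q) (B \<union> Q) h h'"
    and "A \<inter> Q = {}" "B \<inter> Q = {}" "h ` Q \<subseteq> Q" "h' ` Q \<subseteq> Q"
  shows "A homeomorphic B"
proof -
  have "Q \<subseteq> h ` Q"
  proof
    fix q assume "q \<in> Q"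
    then have "h' q \<in> Q" "h (h' q) = q"
      using assms(5) homeomorphism_apply2[OF h] by auto
    then show "q \<in> h ` Q" by force
  qed
  with assms(4) have hQ: "h ` Q = Q" by (rule subset_antisym)
  have "inj_on h (A \<union> Q)"
    using homeomorphism_apply1[OF h] by (rule inj_on_inverseI)
  then have "h ` A \<inter> h ` Q = {}"
    using inj_on_image_Int[of h "A \<union> Q" A Q] assms(2) by simp
  then have "h ` A = (h ` A \<union> h ` Q) - h ` Q" by blast
  also have "\<dots> = (B \<union> Q) - Q"
    using homeomorphism_image1[OF h] hQ by (simp add: image_Un)
  also have "\<dots> = B" using assms(3) by blast
  finally have "homeomorphism A B h h'"
    by (rule homeomorphism_of_subsets[OF h Un_upper1 empty_subsetI])
  then show ?thesis unfolding homeomorphic_def by blast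
qed

text \<open>Here \<open>h'\<close> maps \<open>Q\<close> onto a piece \<open>D\<close> of \<open>A\<close>; with \<open>E = A - D\<close> one gets
  \<open>A = D \<union> E \<cong> Q \<union> E = h' ` B \<cong> B\<close>.\<close>

lemma homeomorphic_cancel_if_displaced:
  fixes A B Q :: "'a::t2_space set"
  assumes h: "homeomorphism (A \<union> Q) (B \<union> Q) h h'"
    and "compact A" "compact B" "compact Q" "A \<inter> Q = {}" "B \<inter> Q = {}" "h ` Q \<inter> Q = {}"
  shows "A homeomorphic B"
proof -
  define D where "D = h' ` Q"
  define E where "E = A - D"
  have "D \<subseteq> A"
  proof
    fix x assume "x \<in> D"
    then obtain q where q: "q \<in> Q" "x = h' q" unfolding D_def by blast
    then have "h x = q" "x \<in> A \<union> Q"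
      using homeomorphism_apply2[OF h] homeomorphism_image2[OF h] by auto
    then show "x \<in> A" using q(1) assms(7) by blast
  qed
  have "h' ` B \<inter> D = {}"
  proof (rule disjoint_iff_not_equal[THEN iffD2], intro ballI notI)
    fix x y assume "x \<in> h' ` B" "y \<in> D" "x = y"
    then obtain b q where "b \<in> B" "q \<in> Q" "x = h' b" "x = h' q" unfolding D_def by auto
    then have "b = q" using homeomorphism_apply2[OF h, of b] homeomorphism_apply2[OF h, of q] by simp
    then show False using \<open>b \<in> B\<close> \<open>q \<in> Q\<close> assms(6) by blast
  qed
  then have hB: "h' ` B = E \<union> Q"
    using homeomorphism_image2[OF h] \<open>D \<subseteq> A\<close> assms(5) unfolding E_def D_def image_Un by blast
  have compact_image: "compact (h' ` S)" if "compact S" "S \<subseteq> B \<union> Q" for S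
    using that continuous_on_subset[OF homeomorphism_cont2[OF h]] compact_continuous_image by blast
  have cD: "compact D"
    unfolding D_def using assms(4) compact_image by blast
  have "compact E"
  proof -
    have "E = A \<inter> h' ` B" using hB assms(5) unfolding E_def by auto
    moreover have "compact (h' ` B)" using assms(3) compact_image by blast
    ultimately show ?thesis using assms(2) by auto
  qed
  have "A = D \<union> E" using \<open>D \<subseteq> A\<close> unfolding E_def by auto
  also have "\<dots> homeomorphic Q \<union> E"
  proof (rule homeomorphic_Un_disjoint)
    show "D \<inter> E = {}" "Q \<inter> E = {}" using assms(5) unfolding E_def by auto
    have "homeomorphism Q D h' h"
      using homeomorphism_of_subsets[OF homeomorphism_symD[OF h] _ _ D_def[symmetric]] by blast
    then have "Q homeomorphic D" unfolding homeomorphic_def by blast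
    then show "D homeomorphic Q" by (rule homeomorphic_sym[THEN iffD1])
  qed (use cD \<open>compact E\<close> in auto)
  also have "Q \<union> E = h' ` B" using hB by blast
  also have "\<dots> homeomorphic B"
  proof -
    have "homeomorphism B (h' ` B) h' h"
      using homeomorphism_of_subsets[OF homeomorphism_symD[OF h] _ _ refl] by blast
    then have "B homeomorphic h' ` B" unfolding homeomorphic_def by blast
    then show ?thesis by (rule homeomorphic_sym[THEN iffD1])
  qed
  finally show ?thesis .
qed

lemma connected_subset_closed_Un_disjoint:
  assumes "connected S" "S \<subseteq> B \<union> Q" "closed B" "closed Q" "B \<inter> Q = {}" "S \<inter> Q \<noteq> {}"
  shows "S \<subseteq> Q"
proof -
  have "B \<inter> Q \<inter> S = {}" using assms(5) by blast
  then have "B \<inter> S = {} \<or> Q \<inter> S = {}" using connected_closedD assms(1-4) by blast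
  then show ?thesis using assms(2,6) by blast
qed

lemma homeomorphic_Un_cancel_connected:
  fixes A B Q :: "'a::t2_space set"
  assumes "compact A" "compact B" "compact Q" "connected Q" "A \<inter> Q = {}" "B \<inter> Q = {}"
    and "(A \<union> Q) homeomorphic (B \<union> Q)"
  shows "A homeomorphic B"
proof -
  obtain h h' where h: "homeomorphism (A \<union> Q) (B \<union> Q) h h'"
    using assms(7) unfolding homeomorphic_def by blast
  have closed: "closed A" "closed B" "closed Q"
    using assms(1-3) compact_imp_closed by auto
  show ?thesis
  proof (cases "h ` Q \<inter> Q = {}")
    case True
    then show ?thesis using homeomorphic_cancel_if_displaced[OF h assms(1-3,5,6)] by blast
  next
    case False
    have "connected (h ` Q)"
      using continuous_on_subset[OF homeomorphism_cont1[OF h]] assms(4)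
      by (intro connected_continuous_image) auto
    have "connected (h' ` Q)"
      using continuous_on_subset[OF homeomorphism_cont2[OF h]] assms(4)
      by (intro connected_continuous_image) auto
    have "h ` Q \<subseteq> B \<union> Q" using homeomorphism_image1[OF h] by blast
    with \<open>connected (h ` Q)\<close> have hQ: "h ` Q \<subseteq> Q"
      using closed(2,3) assms(6) False by (rule connected_subset_closed_Un_disjoint)
    have "h' ` Q \<inter> Q \<noteq> {}"
    proof -
      obtain q where "q \<in> Q" "h q \<in> Q" using False by blast
      then show ?thesis using homeomorphism_apply1[OF h, of q] by force
    qed
    moreover have "h' ` Q \<subseteq> A \<union> Q" using homeomorphism_image2[OF h] by blast
    ultimately have "h' ` Q \<subseteq> Q"
      using connected_subset_closed_Un_disjoint[OF \<open>connected (h' ` Q)\<close> _ closed(1,3) assms(5)]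
      by blast
    then show ?thesis using homeomorphic_cancel_if_invariant[OF h assms(5,6) hQ] by blast
  qed
qed

definition vietoris_subbasis :: "'a::topological_space set \<Rightarrow> 'a set set set" where
  "vietoris_subbasis Z =
     {{K \<in> compact_subsets Z. K \<subseteq> U} | U. openin (top_of_set Z) U} \<union>
     {{K \<in> compact_subsets Z. K \<inter> U \<noteq> {}} | U. openin (top_of_set Z) U}"

lemma vietoris_topology_subbasis: "vietoris_topology Z = topology_generated_by (vietoris_subbasis Z)"
  unfolding vietoris_topology_def vietoris_subbasis_def ..

lemma topspace_vietoris_topology: "topspace (vietoris_topology Z) = compact_subsets Z"
  unfolding vietoris_topology_subbasis topology_generated_by_topspace
proof (rule subset_antisym)
  show "\<Union> (vietoris_subbasis Z) \<subseteq> compact_subsets Z"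
    unfolding vietoris_subbasis_def by blast
  have "{K \<in> compact_subsets Z. K \<subseteq> Z} \<in> vietoris_subbasis Z"
    unfolding vietoris_subbasis_def by (intro UnI1 CollectI exI[of _ Z]) simp
  moreover have "compact_subsets Z = {K \<in> compact_subsets Z. K \<subseteq> Z}"
    by (auto simp: compact_subsets_def)
  ultimately show "compact_subsets Z \<subseteq> \<Union> (vietoris_subbasis Z)" by blast
qed

lemma openin_vietoris_subset:
  "openin (top_of_set Z) U \<Longrightarrow> openin (vietoris_topology Z) {K \<in> compact_subsets Z. K \<subseteq> U}"
  unfolding vietoris_topology_subbasis vietoris_subbasis_def
  by (rule topology_generated_by_Basis) blast

lemma openin_vietoris_meets:
  "openin (top_of_set Z) U \<Longrightarrow> openin (vietoris_topology Z) {K \<in> compact_subsets Z. K \<inter> U \<noteq> {}}"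
  unfolding vietoris_topology_subbasis vietoris_subbasis_def
  by (rule topology_generated_by_Basis) blast

lemma continuous_map_into_vietoris:
  assumes F: "F \<in> topspace X \<rightarrow> compact_subsets W"
    and upper: "\<And>U. openin (top_of_set W) U \<Longrightarrow> openin X {x \<in> topspace X. F x \<subseteq> U}"
    and lower: "\<And>U. openin (top_of_set W) U \<Longrightarrow> openin X {x \<in> topspace X. F x \<inter> U \<noteq> {}}"
  shows "continuous_map X (vietoris_topology W) F"
  unfolding vietoris_topology_subbasis
proof (rule continuous_on_generated_topo)
  fix \<U> assume "\<U> \<in> vietoris_subbasis W"
  then consider U where "openin (top_of_set W) U" "\<U> = {K \<in> compact_subsets W. K \<subseteq> U}"
    | U where "openin (top_of_set W) U" "\<U> = {K \<in> compact_subsets W. K \<inter> U \<noteq> {}}"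
    unfolding vietoris_subbasis_def by blast
  then show "openin X (F -` \<U> \<inter> topspace X)"
  proof cases
    case 1
    then have "F -` \<U> \<inter> topspace X = {x \<in> topspace X. F x \<subseteq> U}" using F by auto
    then show ?thesis using upper[OF 1(1)] by simp
  next
    case 2
    then have "F -` \<U> \<inter> topspace X = {x \<in> topspace X. F x \<inter> U \<noteq> {}}" using F by auto
    then show ?thesis using lower[OF 2(1)] by simp
  qed
next
  show "F ` topspace X \<subseteq> \<Union> (vietoris_subbasis W)"
    using F topspace_vietoris_topology[of W]
    unfolding vietoris_topology_subbasis topology_generated_by_topspace by auto
qed

lemma continuous_map_vietoris_image_Un:
  fixes f :: "'a::topological_space \<Rightarrow> 'b::topological_space"
  assumes f: "continuous_on Z f" "f ` Z \<subseteq> W" and C: "compact C" "C \<subseteq> W"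
  shows "continuous_map (vietoris_topology Z) (vietoris_topology W) (\<lambda>K. f ` K \<union> C)"
proof (rule continuous_map_into_vietoris)
  show "(\<lambda>K. f ` K \<union> C) \<in> topspace (vietoris_topology Z) \<rightarrow> compact_subsets W"
    using f C compact_continuous_image[OF continuous_on_subset[OF f(1)]]
    by (auto simp: topspace_vietoris_topology compact_subsets_def image_subset_iff)
next
  fix U assume "openin (top_of_set W) U"
  then have U: "openin (top_of_set Z) (Z \<inter> f -` U)"
    using continuous_openin_preimage[OF f(1)] f(2) by blast
  have "{K \<in> topspace (vietoris_topology Z). f ` K \<union> C \<subseteq> U} =
      (if C \<subseteq> U then {K \<in> compact_subsets Z. K \<subseteq> Z \<inter> f -` U} else {})"
    by (auto simp: topspace_vietoris_topology compact_subsets_def)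
  then show "openin (vietoris_topology Z) {K \<in> topspace (vietoris_topology Z). f ` K \<union> C \<subseteq> U}"
    using openin_vietoris_subset[OF U] by simp
  have "{K \<in> topspace (vietoris_topology Z). (f ` K \<union> C) \<inter> U \<noteq> {}} =
      (if C \<inter> U = {} then {K \<in> compact_subsets Z. K \<inter> (Z \<inter> f -` U) \<noteq> {}}
       else topspace (vietoris_topology Z))"
    by (auto simp: topspace_vietoris_topology compact_subsets_def)
  then show "openin (vietoris_topology Z) {K \<in> topspace (vietoris_topology Z). (f ` K \<union> C) \<inter> U \<noteq> {}}"
    using openin_vietoris_meets[OF U] by simp
qed

definition shrink :: "real^'n \<Rightarrow> real^'n" where
  "shrink x = (1/8) *\<^sub>R 1 + (1/4) *\<^sub>R x"

definition marker_cube :: "(real^'n) set" where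
  "marker_cube = cbox ((5/8) *\<^sub>R 1) ((7/8) *\<^sub>R 1)"

lemma continuous_on_shrink: "continuous_on S shrink"
  unfolding shrink_def by (intro continuous_intros)

lemma homeomorphic_shrink_image: "S homeomorphic shrink ` S"
  unfolding shrink_def[abs_def] by (rule homeomorphic_affinity) simp

lemma shrink_cbox_component:
  "x \<in> cbox 0 1 \<Longrightarrow> 1/8 \<le> shrink x $ i \<and> shrink x $ i \<le> 3/8"
  by (simp add: mem_box_cart shrink_def)

lemma marker_cube_component: "x \<in> marker_cube \<Longrightarrow> 5/8 \<le> x $ i \<and> x $ i \<le> 7/8"
  by (simp add: marker_cube_def mem_box_cart)

lemma shrink_cbox_subset_box: "shrink ` cbox 0 1 \<subseteq> box 0 1"
proof -
  have "0 < shrink x $ i \<and> shrink x $ i < 1" if "x \<in> cbox 0 1" for x :: "real^'n" and i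
    using shrink_cbox_component[OF that, of i] by linarith
  then show ?thesis
    unfolding image_subset_iff mem_box_cart(1) zero_index one_index by blast
qed

lemma shrink_cbox_disjoint_marker_cube: "shrink ` cbox 0 1 \<inter> marker_cube = {}"
proof -
  have "shrink x \<notin> marker_cube" if "x \<in> cbox 0 1" for x :: "real^'n"
    using shrink_cbox_component[OF that, of undefined] marker_cube_component[of "shrink x" undefined]
    by linarith
  then show ?thesis by blast
qed

lemma marker_cube_subset_box: "marker_cube \<subseteq> box 0 1"
proof -
  have "0 < x $ i \<and> x $ i < 1" if "x \<in> marker_cube" for x :: "real^'n" and i
    using marker_cube_component[OF that, of i] by linarith
  then show ?thesis
    unfolding subset_iff mem_box_cart(1) zero_index one_index by blast
qed

lemma compact_marker_cube: "compact marker_cube"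
  by (simp add: marker_cube_def)

lemma connected_marker_cube: "connected marker_cube"
  by (simp add: marker_cube_def convex_connected)

lemma interior_marker_cube_nonempty: "interior marker_cube \<noteq> {}"
  by (simp add: marker_cube_def interval_eq_empty_cart)

lemma homeomorphic_iff_shrink_Un_marker_cube:
  fixes K L :: "(real^'n) set"
  assumes "compact K" "K \<subseteq> cbox 0 1" "compact L" "L \<subseteq> cbox 0 1"
  shows "K homeomorphic L \<longleftrightarrow> shrink ` K \<union> marker_cube homeomorphic shrink ` L \<union> marker_cube"
proof -
  have "compact (shrink ` K)" "compact (shrink ` L)"
    using assms(1,3) compact_continuous_image[OF continuous_on_shrink] by blast+
  moreover have "shrink ` K \<inter> marker_cube = {}" "shrink ` L \<inter> marker_cube = {}"
    using assms(2,4) shrink_cbox_disjoint_marker_cube by blast+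
  ultimately have "shrink ` K \<union> marker_cube homeomorphic shrink ` L \<union> marker_cube
      \<longleftrightarrow> shrink ` K homeomorphic shrink ` L"
    using homeomorphic_Un_cancel_connected homeomorphic_Un_disjoint
      compact_marker_cube connected_marker_cube by metis
  then show ?thesis
    using homeomorphic_shrink_image homeomorphic_sym homeomorphic_trans by metis
qed

theorem lemma3p17:
  shows "\<exists>\<Phi> :: (real^'n) set \<Rightarrow> (real^'n) set.
    continuous_map (vietoris_topology (cbox 0 1))
      (subtopology (vietoris_topology (box 0 1))
         {K \<in> compact_subsets (box 0 1). interior K \<noteq> {}}) \<Phi> \<and>
    (\<forall>K \<in> compact_subsets (cbox 0 1). \<forall>L \<in> compact_subsets (cbox 0 1).
       (K homeomorphic L) \<longleftrightarrow> (\<Phi> K homeomorphic \<Phi> L))"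
proof (intro exI conjI)
  let ?\<Phi> = "\<lambda>K :: (real^'n) set. shrink ` K \<union> marker_cube"
  have cont: "continuous_map (vietoris_topology (cbox 0 1)) (vietoris_topology (box 0 1)) ?\<Phi>"
    using continuous_on_shrink shrink_cbox_subset_box compact_marker_cube marker_cube_subset_box
    by (rule continuous_map_vietoris_image_Un)
  moreover have "interior (?\<Phi> K) \<noteq> {}" for K
    using interior_marker_cube_nonempty interior_mono[of marker_cube "?\<Phi> K"] by blast
  ultimately show "continuous_map (vietoris_topology (cbox 0 1))
      (subtopology (vietoris_topology (box 0 1))
         {K \<in> compact_subsets (box 0 1). interior K \<noteq> {}}) ?\<Phi>"
    using continuous_map_image_subset_topspace[OF cont]
    by (auto simp: continuous_map_in_subtopology topspace_vietoris_topology)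
  show "\<forall>K \<in> compact_subsets (cbox 0 1). \<forall>L \<in> compact_subsets (cbox 0 1).
       (K homeomorphic L) \<longleftrightarrow> (?\<Phi> K homeomorphic ?\<Phi> L)"
  proof (intro ballI)
    fix K L :: "(real^'n) set"
    assume "K \<in> compact_subsets (cbox 0 1)" "L \<in> compact_subsets (cbox 0 1)"
    then show "K homeomorphic L \<longleftrightarrow> ?\<Phi> K homeomorphic ?\<Phi> L"
      unfolding compact_subsets_def by (intro homeomorphic_iff_shrink_Un_marker_cube) auto
  qed
qed

end
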